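(* For every $\theta\in\mathbb R$, the operator $\widetilde U_\theta$ maps $\widetilde{\mathcal H}$ into itself and is unitary on $\widetilde{\mathcal H}$: $\widetilde U_\theta\widetilde U_\theta^*=\widetilde U_\theta^*\widetilde U_\theta=\mathbb 1$.
   Context: Let $\Bbbk\geq3$ and $\mathcal H=(\mathbb C^2)^{\otimes\Bbbk}$ with orthonormal basis $|\mathrm x\rangle=|\mathrm x_1\rangle\otimes\cdots\otimes|\mathrm x_\Bbbk\rangle$, $\mathrm x_i\in\{0,1\}$. For $j\in\{0,1\}$, $P_{[\![j]\!]}$ is the orthogonal projection onto the span of the $|\mathrm x\rangle$ with $\mathrm x_1=j$. Let $\mathbf U$ be a $2\times2$ unitary matrix all of whose entries have modulus $2^{-1/2}$, and define the unitary $\bar U$ on $\mathcal H$ by $\bar U|\mathrm x\rangle=|\mathrm x_2\rangle\otimes\cdots\otimes|\mathrm x_\Bbbk\rangle\otimes\mathbf U|\mathrm x_1\rangle$. Let $\sigma$ be the unitary exchanging the last two tensor factors: $\sigma(|\mathrm x_1\rangle\otimes\cdots\otimes|\mathrm x_{\Bbbk-1}\rangle\otimes|\mathrm x_\Bbbk\rangle)=|\mathrm x_1\rangle\otimes\cdots\otimes|\mathrm x_\Bbbk\rangle\otimes|\mathrm x_{\Bbbk-1}\rangle$. Put $P'_{[\![j]\!]}=\bar UP_{[\![j]\!]}\bar U^*$. The tower Hilbert space is $\widetilde{\mathcal H}=\mathcal H\oplus P'_{[\![1]\!]}\mathcal H$ with scalar product $\langle(\phi_0,\phi_1),(\phi_0',\phi_1')\rangle=\langle\phi_0,\phi_0'\rangle+\langle\phi_1,\phi_1'\rangle$,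 and for $\theta\in\mathbb R$, $\widetilde U_\theta(\phi_0,\phi_1)=\big(\sigma\bar U P'_{[\![1]\!]}\phi_1+\bar UP_{[\![0]\!]}\phi_0,\ e^{i\theta}\bar UP_{[\![1]\!]}\phi_0\big)$. *)

theory Defs
  imports Complex_Main
begin

text \<open>Basis labels of (C^2)^{\<otimes>k}: bit strings of length k (True = 1, False = 0).
  Operators are given by their matrix kernels K y x = <y|K|x>.\<close>

definition bits :: "nat \<Rightarrow> bool list set" where
  "bits k = {xs. length xs = k}"

definition Hsp :: "nat \<Rightarrow> (bool list \<Rightarrow> complex) set" where
  "Hsp k = {f. \<forall>x. length x \<noteq> k \<longrightarrow> f x = 0}"

definition inner_H :: "nat \<Rightarrow> (bool list \<Rightarrow> complex) \<Rightarrow> (bool list \<Rightarrow> complex) \<Rightarrow> complex" where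
  "inner_H k f g = (\<Sum>x\<in>bits k. cnj (f x) * g x)"

type_synonym kernel = "bool list \<Rightarrow> bool list \<Rightarrow> complex"

definition app :: "nat \<Rightarrow> kernel \<Rightarrow> (bool list \<Rightarrow> complex) \<Rightarrow> (bool list \<Rightarrow> complex)" where
  "app k K f = (\<lambda>y. if length y = k then (\<Sum>x\<in>bits k. K y x * f x) else 0)"

definition kcomp :: "nat \<Rightarrow> kernel \<Rightarrow> kernel \<Rightarrow> kernel" where
  "kcomp k K L = (\<lambda>y x. \<Sum>z\<in>bits k. K y z * L z x)"

definition kadj :: "kernel \<Rightarrow> kernel" where
  "kadj K = (\<lambda>y x. cnj (K x y))"

definition Pj :: "bool \<Rightarrow> kernel" where
  "Pj j = (\<lambda>y x. if y = x \<and> hd x = j then 1 else 0)"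

text \<open>Ubar |x1 x2 ... xk> = |x2 ... xk> \<otimes> U|x1> = sum_b U(b,x1) |x2 ... xk b>.\<close>
definition Ubar :: "(bool \<Rightarrow> bool \<Rightarrow> complex) \<Rightarrow> kernel" where
  "Ubar u = (\<lambda>y x. if butlast y = tl x then u (last y) (hd x) else 0)"

definition swap_last2 :: "bool list \<Rightarrow> bool list" where
  "swap_last2 xs = butlast (butlast xs) @ [last xs, last (butlast xs)]"

definition sigma :: kernel where
  "sigma = (\<lambda>y x. if y = swap_last2 x then 1 else 0)"

definition Pj' :: "nat \<Rightarrow> (bool \<Rightarrow> bool \<Rightarrow> complex) \<Rightarrow> bool \<Rightarrow> kernel" where
  "Pj' k u j = kcomp k (Ubar u) (kcomp k (Pj j) (kadj (Ubar u)))"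

definition Htower :: "nat \<Rightarrow> (bool \<Rightarrow> bool \<Rightarrow> complex) \<Rightarrow>
    ((bool list \<Rightarrow> complex) \<times> (bool list \<Rightarrow> complex)) set" where
  "Htower k u = {(\<phi>0, \<phi>1). \<phi>0 \<in> Hsp k \<and> (\<exists>\<psi>\<in>Hsp k. \<phi>1 = app k (Pj' k u True) \<psi>)}"

definition inner_T :: "nat \<Rightarrow> (bool list \<Rightarrow> complex) \<times> (bool list \<Rightarrow> complex) \<Rightarrow>
    (bool list \<Rightarrow> complex) \<times> (bool list \<Rightarrow> complex) \<Rightarrow> complex" where
  "inner_T k p q = inner_H k (fst p) (fst q) + inner_H k (snd p) (snd q)"

definition Utower :: "nat \<Rightarrow> (bool \<Rightarrow> bool \<Rightarrow> complex) \<Rightarrow> real \<Rightarrow>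
    (bool list \<Rightarrow> complex) \<times> (bool list \<Rightarrow> complex) \<Rightarrow>
    (bool list \<Rightarrow> complex) \<times> (bool list \<Rightarrow> complex)" where
  "Utower k u \<theta> p =
     ((\<lambda>y. app k sigma (app k (Ubar u) (app k (Pj' k u True) (snd p))) y
           + app k (Ubar u) (app k (Pj False) (fst p)) y),
      (\<lambda>y. exp (\<i> * of_real \<theta>) * app k (Ubar u) (app k (Pj True) (fst p)) y))"

end

theory Submission imports Defs begin

text \<open>Write \<open>U = Ubar u\<close>, \<open>Q = P'\<^sub>1 = U P\<^sub>1 U\<^sup>*\<close> and \<open>c = e\<^sup>i\<^sup>\<theta>\<close>, so that
  \<open>U\<^sub>\<theta>(\<phi>\<^sub>0, \<phi>\<^sub>1) = (\<sigma> U Q \<phi>\<^sub>1 + U P\<^sub>0 \<phi>\<^sub>0, c U P\<^sub>1 \<phi>\<^sub>0)\<close>. Its adjoint and inverse on the tower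
  space is \<open>V(a, b) = (P\<^sub>0 U\<^sup>* a + c\<^sup>* U\<^sup>* b, U\<^sup>* \<sigma> Q a)\<close>. Checking this only uses that \<open>U\<close> is
  unitary, \<open>\<sigma>\<close> is a self-adjoint involution and \<open>P\<^sub>0 + P\<^sub>1 = 1\<close>, together with one geometric fact:
  \<open>\<sigma> U Q\<close> and \<open>U\<^sup>* \<sigma> Q\<close> take values in the range of \<open>Q\<close>. This holds because \<open>\<sigma>\<close> merely moves
  the tensor factor \<open>U|x\<^sub>1\<rangle>\<close> created by \<open>U\<close> within the tail, where the next \<open>U\<^sup>*\<close> (applied once or
  twice) finds it again and turns it back into \<open>|x\<^sub>1\<rangle> = |1\<rangle>\<close> in the first position.\<close>

lemma finite_bits [simp]: "finite (bits n)"
proof -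
  have "bits n \<subseteq> {xs. set xs \<subseteq> UNIV \<and> length xs = n}" by (auto simp: bits_def)
  moreover have "finite {xs. set xs \<subseteq> (UNIV::bool set) \<and> length xs = n}"
    by (rule finite_lists_length_eq) simp
  ultimately show ?thesis by (rule finite_subset)
qed

lemma sum_bits_Suc_Cons: "(\<Sum>x\<in>bits (Suc n). F x) = (\<Sum>a\<in>UNIV. \<Sum>w\<in>bits n. F (a # w))"
proof -
  have "bits (Suc n) = (\<lambda>(a, w). a # w) ` (UNIV \<times> bits n)"
    by (auto simp: bits_def image_iff length_Suc_conv)
  then have "(\<Sum>x\<in>bits (Suc n). F x) = (\<Sum>(a, w)\<in>UNIV \<times> bits n. F (a # w))"
    by (simp add: sum.reindex inj_on_def case_prod_beta')
  then show ?thesis by (simp add: sum.cartesian_product)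
qed

lemma sum_bits_Suc_snoc: "(\<Sum>x\<in>bits (Suc n). F x) = (\<Sum>w\<in>bits n. \<Sum>b\<in>UNIV. F (w @ [b]))"
proof -
  have "length x = Suc n \<Longrightarrow> \<exists>w b. x = w @ [b] \<and> length w = n" for x :: "bool list"
    by (metis append_butlast_last_id length_butlast diff_Suc_1 list.size(3) nat.distinct(1))
  then have "bits (Suc n) = (\<lambda>(w, b). w @ [b]) ` (bits n \<times> UNIV)"
    by (force simp: bits_def image_iff)
  then have "(\<Sum>x\<in>bits (Suc n). F x) = (\<Sum>(w, b)\<in>bits n \<times> UNIV. F (w @ [b]))"
    by (simp add: sum.reindex inj_on_def case_prod_beta')
  then show ?thesis by (simp add: sum.cartesian_product)
qed

lemma cnj_exp_i_mult_exp_i: "cnj (exp (\<i> * of_real t)) * exp (\<i> * of_real t) = 1"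
  unfolding cis_conv_exp[symmetric] by (simp add: cis_cnj cis_mult)

lemma sum_UNIV_bool: "(\<Sum>b\<in>(UNIV::bool set). g b) = g False + g True"
  by (simp add: UNIV_bool)

subsection \<open>Kernel operators on \<open>(\<complex>\<^sup>2)\<^sup>\<otimes>\<^sup>k\<close>\<close>

lemma app_in_Hsp [simp]: "app k K f \<in> Hsp k"
  by (simp add: app_def Hsp_def)

lemma app_outside [simp]: "length x \<noteq> k \<Longrightarrow> app k K f x = 0"
  by (simp add: app_def)

lemma Hsp_eqI:
  assumes "f \<in> Hsp k" "g \<in> Hsp k" "\<And>y. length y = k \<Longrightarrow> f y = g y"
  shows "f = g"
proof
  fix x
  show "f x = g x" using assms by (cases "length x = k") (auto simp: Hsp_def)
qed

lemma Hsp_add [simp]: "f \<in> Hsp k \<Longrightarrow> g \<in> Hsp k \<Longrightarrow> (\<lambda>y. f y + g y) \<in> Hsp k"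
  by (simp add: Hsp_def)

lemma Hsp_scale [simp]: "f \<in> Hsp k \<Longrightarrow> (\<lambda>y. c * f y) \<in> Hsp k"
  by (simp add: Hsp_def)

lemma app_add: "app k K (\<lambda>y. f y + g y) = (\<lambda>y. app k K f y + app k K g y)"
  by (auto simp: app_def sum.distrib algebra_simps)

lemma app_scale: "app k K (\<lambda>y. c * f y) = (\<lambda>y. c * app k K f y)"
  by (auto simp: app_def sum_distrib_left algebra_simps)

lemma app_zero: "app k K (\<lambda>y. 0) = (\<lambda>y. 0)"
  by (auto simp: app_def)

lemma app_kcomp: "app k (kcomp k K L) f = app k K (app k L f)"
proof
  fix y
  show "app k (kcomp k K L) f y = app k K (app k L f) y"
  proof (cases "length y = k")
    case True
    have "app k (kcomp k K L) f y = (\<Sum>x\<in>bits k. \<Sum>z\<in>bits k. K y z * L z x * f x)"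
      using True by (simp add: app_def kcomp_def sum_distrib_right)
    also have "\<dots> = (\<Sum>z\<in>bits k. K y z * (\<Sum>x\<in>bits k. L z x * f x))"
      by (subst sum.swap) (simp add: sum_distrib_left mult.assoc)
    also have "\<dots> = app k K (app k L f) y"
      using True by (simp add: app_def bits_def)
    finally show ?thesis .
  qed simp
qed

lemma inner_H_app: "inner_H k (app k K f) g = inner_H k f (app k (kadj K) g)"
proof -
  have "inner_H k (app k K f) g = (\<Sum>y\<in>bits k. \<Sum>x\<in>bits k. cnj (K y x) * cnj (f x) * g y)"
    by (simp add: inner_H_def app_def bits_def sum_distrib_right)
  also have "\<dots> = (\<Sum>x\<in>bits k. cnj (f x) * (\<Sum>y\<in>bits k. cnj (K y x) * g y))"
    by (subst sum.swap) (simp add: sum_distrib_left algebra_simps)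
  also have "\<dots> = inner_H k f (app k (kadj K) g)"
    by (simp add: inner_H_def app_def bits_def kadj_def)
  finally show ?thesis .
qed

lemma kadj_kadj [simp]: "kadj (kadj K) = K"
  by (simp add: kadj_def)

lemma kadj_Pj [simp]: "kadj (Pj j) = Pj j"
  by (auto simp: kadj_def Pj_def fun_eq_iff)

lemma inner_H_add_left: "inner_H k (\<lambda>y. f y + g y) h = inner_H k f h + inner_H k g h"
  by (simp add: inner_H_def sum.distrib algebra_simps)

lemma inner_H_add_right: "inner_H k h (\<lambda>y. f y + g y) = inner_H k h f + inner_H k h g"
  by (simp add: inner_H_def sum.distrib algebra_simps)

lemma inner_H_scale_left: "inner_H k (\<lambda>y. c * f y) h = cnj c * inner_H k f h"
  by (simp add: inner_H_def sum_distrib_left algebra_simps)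

lemma inner_H_scale_right: "inner_H k h (\<lambda>y. c * f y) = c * inner_H k h f"
  by (simp add: inner_H_def sum_distrib_left algebra_simps)

lemma app_Ubar:
  assumes "length y = Suc n"
  shows "app (Suc n) (Ubar u) f y = (\<Sum>a\<in>UNIV. u (last y) a * f (a # butlast y))"
proof -
  have "app (Suc n) (Ubar u) f y
      = (\<Sum>x\<in>bits (Suc n). (if butlast y = tl x then u (last y) (hd x) else 0) * f x)"
    using assms by (simp add: app_def Ubar_def)
  also have "\<dots> = (\<Sum>a\<in>UNIV. \<Sum>w\<in>bits n.
      if w = butlast y then u (last y) a * f (a # butlast y) else 0)"
    unfolding sum_bits_Suc_Cons by (intro sum.cong refl) auto
  moreover have "butlast y \<in> bits n" using assms by (simp add: bits_def)
  ultimately show ?thesis by simp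
qed

lemma app_kadj_Ubar:
  assumes "length y = Suc n"
  shows "app (Suc n) (kadj (Ubar u)) f y = (\<Sum>b\<in>UNIV. cnj (u b (hd y)) * f (tl y @ [b]))"
proof -
  have "app (Suc n) (kadj (Ubar u)) f y
      = (\<Sum>x\<in>bits (Suc n). cnj (if butlast x = tl y then u (last x) (hd y) else 0) * f x)"
    using assms by (simp add: app_def Ubar_def kadj_def)
  also have "\<dots> = (\<Sum>b\<in>UNIV. \<Sum>w\<in>bits n.
      if w = tl y then cnj (u b (hd y)) * f (tl y @ [b]) else 0)"
    unfolding sum_bits_Suc_snoc by (subst sum.swap) (intro sum.cong refl; auto)
  moreover have "tl y \<in> bits n" using assms by (simp add: bits_def)
  ultimately show ?thesis by simp
qed

lemma app_Pj:
  assumes "length y = k"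
  shows "app k (Pj j) f y = (if hd y = j then f y else 0)"
proof -
  have "app k (Pj j) f y = (\<Sum>x\<in>bits k. (if y = x \<and> hd x = j then 1 else 0) * f x)"
    using assms by (simp add: app_def Pj_def)
  also have "\<dots> = (\<Sum>x\<in>bits k. if y = x then (if hd y = j then f y else 0) else 0)"
    by (intro sum.cong refl) auto
  moreover have "y \<in> bits k" using assms by (simp add: bits_def)
  ultimately show ?thesis by simp
qed

lemma swap_last2_snoc2 [simp]: "swap_last2 (ys @ [a, b]) = ys @ [b, a]"
  by (simp add: swap_last2_def butlast_append)

lemma swap_last2_snoc3 [simp]: "swap_last2 (ys @ [x, a, b]) = ys @ [x, b, a]"
  using swap_last2_snoc2[of "ys @ [x]" a b] by simp

lemma swap_last2_Cons_snoc2 [simp]: "swap_last2 (x # ys @ [a, b]) = x # ys @ [b, a]"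
  using swap_last2_snoc2[of "x # ys" a b] by simp

lemma length_ge_2_snoc2: "2 \<le> length xs \<Longrightarrow> \<exists>ys a b. xs = ys @ [a, b]"
  by (metis One_nat_def Suc_1 append.assoc append_Cons append_butlast_last_id append_self_conv2
      le_zero_eq length_0_conv length_butlast not_less_eq_eq diff_is_0_eq nat.distinct(1)
      numeral_2_eq_2 zero_neq_numeral)

lemma swap_last2_swap_last2: "2 \<le> length xs \<Longrightarrow> swap_last2 (swap_last2 xs) = xs"
  using length_ge_2_snoc2 by force

lemma length_swap_last2: "2 \<le> length xs \<Longrightarrow> length (swap_last2 xs) = length xs"
  using length_ge_2_snoc2 by force

lemma app_sigma:
  assumes "length y = k" "2 \<le> k"
  shows "app k sigma f y = f (swap_last2 y)"
proof -
  have "app k sigma f y = (\<Sum>x\<in>bits k. (if y = swap_last2 x then 1 else 0) * f x)"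
    using assms by (simp add: app_def sigma_def)
  also have "\<dots> = (\<Sum>x\<in>bits k. if x = swap_last2 y then f (swap_last2 y) else 0)"
    using assms by (intro sum.cong refl) (auto simp: bits_def swap_last2_swap_last2 length_swap_last2)
  moreover have "swap_last2 y \<in> bits k" using assms by (simp add: bits_def length_swap_last2)
  ultimately show ?thesis by simp
qed

lemma app_kadj_sigma_pointwise:
  assumes "length y = k" "2 \<le> k"
  shows "app k (kadj sigma) f y = f (swap_last2 y)"
proof -
  have "app k (kadj sigma) f y = (\<Sum>x\<in>bits k. (if x = swap_last2 y then 1 else 0) * f x)"
    using assms unfolding app_def sigma_def kadj_def by simp (intro sum.cong refl; simp)
  also have "\<dots> = (\<Sum>x\<in>bits k. if x = swap_last2 y then f (swap_last2 y) else 0)"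
    by (intro sum.cong refl) auto
  moreover have "swap_last2 y \<in> bits k" using assms by (simp add: bits_def length_swap_last2)
  ultimately show ?thesis by simp
qed

lemma app_kadj_sigma: "2 \<le> k \<Longrightarrow> app k (kadj sigma) f = app k sigma f"
  by (rule Hsp_eqI[where k = k]) (auto simp: app_sigma app_kadj_sigma_pointwise)

lemma app_sigma_sigma: "2 \<le> k \<Longrightarrow> f \<in> Hsp k \<Longrightarrow> app k sigma (app k sigma f) = f"
  by (rule Hsp_eqI[where k = k]) (auto simp: app_sigma length_swap_last2 swap_last2_swap_last2)

lemma app_Pj_False_add_Pj_True:
  "f \<in> Hsp k \<Longrightarrow> (\<lambda>y. app k (Pj False) f y + app k (Pj True) f y) = f"
  by (rule Hsp_eqI[where k = k]) (auto simp: app_Pj Hsp_def)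

lemma inner_H_app_sigma: "2 \<le> k \<Longrightarrow> inner_H k (app k sigma f) g = inner_H k f (app k sigma g)"
  by (simp add: inner_H_app app_kadj_sigma)

lemma app_Pj_Pj:
  "app k (Pj i) (app k (Pj j) f) = (if i = j then app k (Pj j) f else (\<lambda>y. 0))"
  by (rule Hsp_eqI[where k = k]) (auto simp: app_Pj Hsp_def)

lemma app_Ubar_kadj_Ubar_Suc:
  assumes rows: "\<And>i j. (\<Sum>b\<in>UNIV. u i b * cnj (u j b)) = (if i = j then 1 else 0)"
    and "f \<in> Hsp (Suc n)"
  shows "app (Suc n) (Ubar u) (app (Suc n) (kadj (Ubar u)) f) = f"
proof (rule Hsp_eqI[where k = "Suc n"])
  fix y :: "bool list"
  assume y: "length y = Suc n"
  then have y_snoc: "butlast y @ [last y] = y"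
    by (metis append_butlast_last_id list.size(3) nat.distinct(1))
  have "app (Suc n) (Ubar u) (app (Suc n) (kadj (Ubar u)) f) y
      = (\<Sum>a\<in>UNIV. u (last y) a * (\<Sum>b\<in>UNIV. cnj (u b a) * f (butlast y @ [b])))"
    using y by (simp add: app_Ubar app_kadj_Ubar)
  also have "\<dots> = (\<Sum>b\<in>UNIV. (\<Sum>a\<in>UNIV. u (last y) a * cnj (u b a)) * f (butlast y @ [b]))"
    by (simp add: sum_distrib_left sum_distrib_right algebra_simps) (rule sum.swap)
  also have "\<dots> = f y"
    using y_snoc by (cases "last y") (simp_all add: rows sum_UNIV_bool)
  finally show "app (Suc n) (Ubar u) (app (Suc n) (kadj (Ubar u)) f) y = f y" .
qed (use assms in auto)

lemma app_kadj_Ubar_Ubar_Suc: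
  assumes cols: "\<And>i j. (\<Sum>b\<in>UNIV. cnj (u b i) * u b j) = (if i = j then 1 else 0)"
    and "f \<in> Hsp (Suc n)"
  shows "app (Suc n) (kadj (Ubar u)) (app (Suc n) (Ubar u) f) = f"
proof (rule Hsp_eqI[where k = "Suc n"])
  fix y :: "bool list"
  assume y: "length y = Suc n"
  then have y_Cons: "hd y # tl y = y"
    by (metis list.collapse list.size(3) nat.distinct(1))
  have "app (Suc n) (kadj (Ubar u)) (app (Suc n) (Ubar u) f) y
      = (\<Sum>b\<in>UNIV. cnj (u b (hd y)) * (\<Sum>a\<in>UNIV. u b a * f (a # tl y)))"
    using y by (simp add: app_Ubar app_kadj_Ubar)
  also have "\<dots> = (\<Sum>a\<in>UNIV. (\<Sum>b\<in>UNIV. cnj (u b (hd y)) * u b a) * f (a # tl y))"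
    by (simp add: sum_distrib_left sum_distrib_right algebra_simps) (rule sum.swap)
  also have "\<dots> = f y"
    using y_Cons by (cases "hd y") (simp_all add: cols sum_UNIV_bool)
  finally show "app (Suc n) (kadj (Ubar u)) (app (Suc n) (Ubar u) f) y = f y" .
qed (use assms in auto)

lemma app_Ubar_kadj_Ubar:
  assumes "\<And>i j. (\<Sum>b\<in>UNIV. u i b * cnj (u j b)) = (if i = j then 1 else 0)"
    and "0 < k" "f \<in> Hsp k"
  shows "app k (Ubar u) (app k (kadj (Ubar u)) f) = f"
  using assms app_Ubar_kadj_Ubar_Suc[where n = "k - 1"] by simp

lemma app_kadj_Ubar_Ubar:
  assumes "\<And>i j. (\<Sum>b\<in>UNIV. cnj (u b i) * u b j) = (if i = j then 1 else 0)"
    and "0 < k" "f \<in> Hsp k"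
  shows "app k (kadj (Ubar u)) (app k (Ubar u) f) = f"
  using assms app_kadj_Ubar_Ubar_Suc[where n = "k - 1"] by simp

lemma Cons_Cons_snoc_obtain:
  assumes "length y = Suc (Suc (Suc n))"
  obtains x0 a w d where "y = x0 # a # w @ [d]" "length w = n"
proof -
  obtain x0 a y2 where y: "y = x0 # a # y2" "length y2 = Suc n"
    using assms by (auto simp: length_Suc_conv)
  then have "y2 = butlast y2 @ [last y2]"
    by (metis append_butlast_last_id list.size(3) nat.distinct(1))
  then show ?thesis using that y by (metis length_butlast diff_Suc_1)
qed

text \<open>In operator form: \<open>\<sigma> U U P\<^sub>1\<close> and \<open>U\<^sup>* \<sigma> U P\<^sub>1\<close> take values in the range of
  \<open>P'\<^sub>1 = U P\<^sub>1 U\<^sup>*\<close>.\<close>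

lemma Pj_kadj_Ubar_sigma_Ubar_Ubar_Pj:
  assumes cols: "\<And>i j. (\<Sum>b\<in>UNIV. cnj (u b i) * u b j) = (if i = j then 1 else 0)"
    and "3 \<le> k"
  shows "app k (Pj False) (app k (kadj (Ubar u)) (app k sigma
           (app k (Ubar u) (app k (Ubar u) (app k (Pj True) g))))) = (\<lambda>y. 0)"
proof (rule Hsp_eqI[where k = k])
  define n where "n = k - 3"
  have k: "k = Suc (Suc (Suc n))" using \<open>3 \<le> k\<close> unfolding n_def by arith
  fix y :: "bool list"
  assume y: "length y = k"
  then obtain x0 a w d where yv: "y = x0 # a # w @ [d]" and w: "length w = n"
    unfolding k by (rule Cons_Cons_snoc_obtain)
  show "app k (Pj False) (app k (kadj (Ubar u)) (app k sigma
      (app k (Ubar u) (app k (Ubar u) (app k (Pj True) g))))) y = 0"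
  proof (cases x0)
    case False
    then have x0: "x0 = False" by simp
    have "app k (Pj False) (app k (kadj (Ubar u)) (app k sigma
        (app k (Ubar u) (app k (Ubar u) (app k (Pj True) g))))) y
      = (\<Sum>b\<in>UNIV. cnj (u b False) * (\<Sum>e\<in>UNIV. u d e * (\<Sum>e'\<in>UNIV.
           u b e' * (if e' then g (e' # e # a # w) else 0))))"
      using w unfolding yv x0 k by (simp add: app_Pj app_kadj_Ubar app_sigma app_Ubar butlast_append)
    also have "\<dots> = (\<Sum>b\<in>UNIV. cnj (u b False) * u b True) * (\<Sum>e\<in>UNIV. u d e * g (True # e # a # w))"
      by (simp add: sum_UNIV_bool algebra_simps)
    also have "\<dots> = 0" by (simp add: cols)
    finally show ?thesis .
  qed (use y yv in \<open>simp add: app_Pj\<close>)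
qed (auto simp: Hsp_def)

lemma Pj_kadj_Ubar_kadj_Ubar_sigma_Ubar_Pj:
  assumes cols: "\<And>i j. (\<Sum>b\<in>UNIV. cnj (u b i) * u b j) = (if i = j then 1 else 0)"
    and "3 \<le> k"
  shows "app k (Pj False) (app k (kadj (Ubar u)) (app k (kadj (Ubar u)) (app k sigma
           (app k (Ubar u) (app k (Pj True) g))))) = (\<lambda>y. 0)"
proof (rule Hsp_eqI[where k = k])
  define n where "n = k - 3"
  have k: "k = Suc (Suc (Suc n))" using \<open>3 \<le> k\<close> unfolding n_def by arith
  fix y :: "bool list"
  assume y: "length y = k"
  then obtain x0 a w d where yv: "y = x0 # a # w @ [d]" and w: "length w = n"
    unfolding k by (rule Cons_Cons_snoc_obtain)
  show "app k (Pj False) (app k (kadj (Ubar u)) (app k (kadj (Ubar u)) (app k sigma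
      (app k (Ubar u) (app k (Pj True) g))))) y = 0"
  proof (cases x0)
    case False
    then have x0: "x0 = False" by simp
    have "app k (Pj False) (app k (kadj (Ubar u)) (app k (kadj (Ubar u)) (app k sigma
        (app k (Ubar u) (app k (Pj True) g))))) y
      = (\<Sum>c\<in>UNIV. cnj (u c False) * (\<Sum>b\<in>UNIV. cnj (u b a) * (\<Sum>e\<in>UNIV.
           u c e * (if e then g (e # w @ [d, b]) else 0))))"
      using w unfolding yv x0 k by (simp add: app_Pj app_kadj_Ubar app_sigma app_Ubar butlast_append)
    also have "\<dots> = (\<Sum>c\<in>UNIV. cnj (u c False) * u c True) * (\<Sum>b\<in>UNIV. cnj (u b a) * g (True # w @ [d, b]))"
      by (simp add: sum_UNIV_bool algebra_simps)
    also have "\<dots> = 0" by (simp add: cols)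
    finally show ?thesis .
  qed (use y yv in \<open>simp add: app_Pj\<close>)
qed (auto simp: Hsp_def)

subsection \<open>The tower operator\<close>

locale tower =
  fixes k :: nat and u :: "bool \<Rightarrow> bool \<Rightarrow> complex" and \<theta> :: real
  assumes three_le_k: "3 \<le> k"
    and rows: "\<And>i j. (\<Sum>b\<in>UNIV. u i b * cnj (u j b)) = (if i = j then 1 else 0)"
    and cols: "\<And>i j. (\<Sum>b\<in>UNIV. cnj (u b i) * u b j) = (if i = j then 1 else 0)"
begin

abbreviation "Uop \<equiv> app k (Ubar u)"
abbreviation "Uadj \<equiv> app k (kadj (Ubar u))"
abbreviation "Sop \<equiv> app k sigma"
abbreviation "P0 \<equiv> app k (Pj False)"
abbreviation "P1 \<equiv> app k (Pj True)"
abbreviation "Q \<equiv> app k (Pj' k u True)"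
abbreviation "phase \<equiv> exp (\<i> * of_real \<theta>)"

lemma Uop_Uadj [simp]: "f \<in> Hsp k \<Longrightarrow> Uop (Uadj f) = f"
  using rows three_le_k by (simp add: app_Ubar_kadj_Ubar)

lemma Uadj_Uop [simp]: "f \<in> Hsp k \<Longrightarrow> Uadj (Uop f) = f"
  using cols three_le_k by (simp add: app_kadj_Ubar_Ubar)

lemma Sop_Sop [simp]: "f \<in> Hsp k \<Longrightarrow> Sop (Sop f) = f"
  using three_le_k by (simp add: app_sigma_sigma)

lemma Q_eq: "Q f = Uop (P1 (Uadj f))"
  by (simp add: Pj'_def app_kcomp)

lemma Uadj_Q: "Uadj (Q f) = P1 (Uadj f)"
  by (simp add: Q_eq)

lemma Q_Q [simp]: "Q (Q f) = Q f"
  by (simp add: Q_eq app_Pj_Pj)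

lemma inner_H_Q: "inner_H k (Q f) g = inner_H k f (Q g)"
  by (simp add: Q_eq inner_H_app)

lemma Q_Uop_P0 [simp]: "Q (Uop (P0 f)) = (\<lambda>y. 0)"
  by (simp add: Q_eq app_Pj_Pj app_zero)

lemma Q_Uop_P1 [simp]: "Q (Uop (P1 f)) = Uop (P1 f)"
  by (simp add: Q_eq app_Pj_Pj)

lemma Q_fixed:
  assumes "h \<in> Hsp k" "P0 (Uadj h) = (\<lambda>y. 0)"
  shows "Q h = h"
proof -
  have "P1 (Uadj h) = Uadj h"
    using app_Pj_False_add_Pj_True[where f = "Uadj h" and k = k] assms(2) by simp
  then show ?thesis using assms(1) by (simp add: Q_eq)
qed

lemma P0_Uadj_Sop_Uop_Q [simp]: "P0 (Uadj (Sop (Uop (Q f)))) = (\<lambda>y. 0)"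
  by (simp add: Q_eq Pj_kadj_Ubar_sigma_Ubar_Ubar_Pj[OF cols three_le_k])

lemma Q_Sop_Uop_Q [simp]: "Q (Sop (Uop (Q f))) = Sop (Uop (Q f))"
  by (rule Q_fixed) simp_all

lemma Q_Uadj_Sop_Q [simp]: "Q (Uadj (Sop (Q f))) = Uadj (Sop (Q f))"
  by (rule Q_fixed)
    (simp_all add: Q_eq Pj_kadj_Ubar_kadj_Ubar_sigma_Ubar_Pj[OF cols three_le_k])

lemma mem_Htower_iff: "p \<in> Htower k u \<longleftrightarrow> fst p \<in> Hsp k \<and> Q (snd p) = snd p"
  by (cases p) (auto simp: Htower_def, metis app_in_Hsp)

definition tower_inverse ::
    "(bool list \<Rightarrow> complex) \<times> (bool list \<Rightarrow> complex) \<Rightarrow> (bool list \<Rightarrow> complex) \<times> (bool list \<Rightarrow> complex)"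
  where "tower_inverse q =
    ((\<lambda>y. P0 (Uadj (fst q)) y + cnj phase * Uadj (snd q) y), Uadj (Sop (Q (fst q))))"

lemma Utower_mem_Htower: "p \<in> Htower k u \<Longrightarrow> Utower k u \<theta> p \<in> Htower k u"
  by (simp add: mem_Htower_iff Utower_def app_scale)

lemma tower_inverse_mem_Htower: "q \<in> Htower k u \<Longrightarrow> tower_inverse q \<in> Htower k u"
  by (simp add: mem_Htower_iff tower_inverse_def)

lemma inner_T_Utower:
  assumes "p \<in> Htower k u" "q \<in> Htower k u"
  shows "inner_T k (Utower k u \<theta> p) q = inner_T k p (tower_inverse q)"
proof -
  obtain \<phi>0 \<phi>1 a b where p: "p = (\<phi>0, \<phi>1)" and q: "q = (a, b)" by fastforce
  have b: "Q b = b"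
    using assms(2) by (simp add: mem_Htower_iff q)
  have P0_term: "inner_H k (Uop (P0 \<phi>0)) a = inner_H k \<phi>0 (P0 (Uadj a))"
    by (simp add: inner_H_app)
  have "P1 (Uadj b) = Uadj b"
    using Uadj_Q[of b] by (simp add: b)
  then have P1_term: "inner_H k (Uop (P1 \<phi>0)) b = inner_H k \<phi>0 (Uadj b)"
    by (simp add: inner_H_app)
  have "inner_H k (Sop (Uop (Q \<phi>1))) a = inner_H k (Q (Sop (Uop (Q \<phi>1)))) a"
    by simp
  also have "\<dots> = inner_H k (Sop (Uop (Q \<phi>1))) (Q a)"
    by (rule inner_H_Q)
  also have "\<dots> = inner_H k (Q \<phi>1) (Uadj (Sop (Q a)))"
    using three_le_k by (simp add: inner_H_app_sigma inner_H_app[of k "Ubar u"])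
  also have "\<dots> = inner_H k \<phi>1 (Uadj (Sop (Q a)))"
    by (metis inner_H_Q Q_Uadj_Sop_Q)
  finally have sigma_term: "inner_H k (Sop (Uop (Q \<phi>1))) a = inner_H k \<phi>1 (Uadj (Sop (Q a)))" .
  show ?thesis
    by (simp add: p q inner_T_def Utower_def tower_inverse_def inner_H_add_left inner_H_add_right
        inner_H_scale_left inner_H_scale_right P0_term P1_term sigma_term)
qed

lemma Utower_tower_inverse:
  assumes "q \<in> Htower k u"
  shows "Utower k u \<theta> (tower_inverse q) = q"
proof -
  obtain a b where q: "q = (a, b)" by fastforce
  have a: "a \<in> Hsp k" and b: "Q b = b"
    using assms by (simp_all add: mem_Htower_iff q)
  have "b \<in> Hsp k" by (metis b app_in_Hsp)
  have P1_Uadj_b: "P1 (Uadj b) = Uadj b"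
    using Uadj_Q[of b] by (simp add: b)
  then have P0_Uadj_b: "P0 (Uadj b) = (\<lambda>y. 0)"
    by (metis app_Pj_Pj)
  have "(\<lambda>y. Q a y + Uop (P0 (Uadj a)) y) = Uop (\<lambda>y. P0 (Uadj a) y + P1 (Uadj a) y)"
    by (simp add: Q_eq app_add add.commute)
  also have "\<dots> = a"
    using a by (simp add: app_Pj_False_add_Pj_True)
  finally have fst_eq: "(\<lambda>y. Q a y + Uop (P0 (Uadj a)) y) = a" .
  have unit: "phase * cnj phase = 1"
    using cnj_exp_i_mult_exp_i[of \<theta>] by (simp add: mult.commute)
  show ?thesis
    using a \<open>b \<in> Hsp k\<close> unit
    by (simp add: q Utower_def tower_inverse_def app_add app_scale app_Pj_Pj P0_Uadj_b P1_Uadj_b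
        fst_eq mult.assoc[symmetric])
qed

lemma tower_inverse_Utower:
  assumes "p \<in> Htower k u"
  shows "tower_inverse (Utower k u \<theta> p) = p"
proof -
  obtain \<phi>0 \<phi>1 where p: "p = (\<phi>0, \<phi>1)" by fastforce
  have \<phi>0: "\<phi>0 \<in> Hsp k" and \<phi>1: "Q \<phi>1 = \<phi>1"
    using assms by (simp_all add: mem_Htower_iff p)
  have fst_eq: "(\<lambda>y. P0 (P0 \<phi>0) y + cnj phase * (phase * P1 \<phi>0 y)) = \<phi>0"
    using \<phi>0 cnj_exp_i_mult_exp_i[of \<theta>]
    by (simp add: app_Pj_Pj mult.assoc[symmetric] app_Pj_False_add_Pj_True)
  have "tower_inverse (Utower k u \<theta> (\<phi>0, Q \<phi>1)) = (\<phi>0, Q \<phi>1)"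
    using \<phi>0 by (simp add: Utower_def tower_inverse_def app_add app_scale app_zero fst_eq)
  then show ?thesis by (simp add: p \<phi>1)
qed

end

theorem proposition6:
  fixes k :: nat and u :: "bool \<Rightarrow> bool \<Rightarrow> complex"
  assumes "k \<ge> 3"
    and "\<And>i j. (\<Sum>b\<in>UNIV. u i b * cnj (u j b)) = (if i = j then 1 else 0)"
    and "\<And>i j. (\<Sum>b\<in>UNIV. cnj (u b i) * u b j) = (if i = j then 1 else 0)"
    and "\<And>i j. cmod (u i j) = 1 / sqrt 2"
  shows "\<forall>\<theta>::real.
    (\<forall>p\<in>Htower k u. Utower k u \<theta> p \<in> Htower k u) \<and>
    (\<exists>V. (\<forall>p\<in>Htower k u. V p \<in> Htower k u) \<and>
         (\<forall>p\<in>Htower k u. \<forall>q\<in>Htower k u. inner_T k (Utower k u \<theta> p) q = inner_T k p (V q)) \<and>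
         (\<forall>p\<in>Htower k u. Utower k u \<theta> (V p) = p \<and> V (Utower k u \<theta> p) = p))"
proof -
  have "tower k u"
    using assms(1-3) by unfold_locales
  then show ?thesis
    using tower.Utower_mem_Htower tower.tower_inverse_mem_Htower tower.inner_T_Utower
      tower.Utower_tower_inverse tower.tower_inverse_Utower
    by (metis (no_types))
qed

end
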